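(* Let $\mathcal{M}$ be the set of compactly supported probability distributions on $\mathbb{R}$ and $T:\mathcal{M}\to\mathcal{M}$. (i) $T\circ T^u=T^u\circ T$ for every increasing left-continuous $u:\mathbb{R}\to\mathbb{R}$ if and only if $T=T_d$ for some right-continuous distortion function $d$. (ii) $T\circ T_d=T_d\circ T$ for every right-continuous distortion function $d$ if and only if $T=T^u$ for some increasing left-continuous $u:\mathbb{R}\to\mathbb{R}$.
   Context: Increasing means non-decreasing. A distortion function is an increasing function $d:[0,1]\to[0,1]$ with $d(0)=0$, $d(1)=1$. $T_d(F)(x)=\lim_{y\downarrow x}d(F(y))$ for $x\in\mathbb{R}$. For increasing $u$, $T^u(F)=F\circ u^{-1}$ is the distribution of $u(X)$ when $X\sim F$. *)

theory Defs
  imports "HOL-Probability.Probability"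
begin

definition cs_dists :: "real measure set" where
  "cs_dists = {M. real_distribution M \<and> (\<exists>a b. measure M {a..b} = 1)}"

definition distortion :: "(real \<Rightarrow> real) \<Rightarrow> bool" where
  "distortion d \<longleftrightarrow> mono_on {0..1} d \<and> d ` {0..1} \<subseteq> {0..1} \<and> d 0 = 0 \<and> d 1 = 1"

definition rc_distortion :: "(real \<Rightarrow> real) \<Rightarrow> bool" where
  "rc_distortion d \<longleftrightarrow> distortion d \<and> (\<forall>x\<in>{0..<1}. continuous (at_right x) d)"

definition Td :: "(real \<Rightarrow> real) \<Rightarrow> real measure \<Rightarrow> real measure" where
  "Td d M = interval_measure (\<lambda>x. Lim (at_right x) (\<lambda>y. d (cdf M y)))"

definition Tu :: "(real \<Rightarrow> real) \<Rightarrow> real measure \<Rightarrow> real measure" where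
  "Tu u M = distr M borel u"

definition incr_left_cont :: "(real \<Rightarrow> real) \<Rightarrow> bool" where
  "incr_left_cont u \<longleftrightarrow> mono u \<and> (\<forall>x. continuous (at_left x) u)"

end

theory Submission
  imports Defs
begin

text \<open>Both \<open>T\<^sub>d\<close> and \<open>T\<^sup>u\<close> act on the cdf \<open>F\<close>: the first by \<open>F \<mapsto> d \<circ> F\<close>, the second by
  \<open>F \<mapsto> F \<circ> u\<^sup>-\<^sup>1\<close>, and they commute because the sublevel sets \<open>{u \<le> x}\<close> of an increasing
  left-continuous \<open>u\<close> are empty, everything, or half-lines \<open>(-\<infinity>,a]\<close>.

  If \<open>T\<close> commutes with every \<open>T\<^sup>u\<close>, it is determined by \<open>N = T(U)\<close> for the uniform
  distribution \<open>U\<close> on \<open>[0,1]\<close>: every \<open>M\<close> is \<open>T\<^sup>q(U)\<close> for its (left-continuous) quantile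
  function \<open>q\<close>, so \<open>T(M) = T\<^sup>q(N)\<close>, whose cdf is \<open>cdf N \<circ> F\<^sub>M\<close>. Two maps \<open>u\<close> fixing \<open>U\<close>
  force \<open>N\<close> onto \<open>(0,1]\<close>, so \<open>d = cdf N\<close> is a right-continuous distortion.

  If \<open>T\<close> commutes with every \<open>T\<^sub>d\<close>, apply this to the step distortions \<open>1\<^bsub>[p,1]\<^esub>\<close>, which
  send \<open>M\<close> to the Dirac mass at its \<open>p\<close>-quantile. Hence \<open>T\<close> maps Dirac masses \<open>\<delta>\<^sub>c\<close> to
  Dirac masses \<open>\<delta>\<^bsub>w(c)\<^esub>\<close> and the \<open>p\<close>-quantile of \<open>T(M)\<close> is \<open>w\<close> applied to the
  \<open>p\<close>-quantile of \<open>M\<close>. Testing on uniform distributions shows that \<open>w\<close> is increasing and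
  left-continuous; since \<open>T\<^sup>w(M)\<close> has the same quantiles, \<open>T = T\<^sup>w\<close>.\<close>

lemma cs_dists_iff_cdf:
  "M \<in> cs_dists \<longleftrightarrow> real_distribution M \<and> (\<exists>a b. cdf M a = 0 \<and> cdf M b = 1)"
proof
  assume "M \<in> cs_dists"
  then obtain a b where rd: "real_distribution M" and ab: "measure M {a..b} = 1"
    unfolding cs_dists_def by auto
  interpret real_distribution M by fact
  have "measure M ({..a-1} \<union> {a..b}) = measure M {..a-1} + measure M {a..b}"
    by (intro finite_measure_Union) auto
  then have "cdf M (a-1) = 0"
    using ab prob_le_1[of "{..a-1} \<union> {a..b}"] cdf_nonneg[of "a-1"] unfolding cdf_def2 by simp
  moreover have "measure M {a..b} \<le> cdf M b"
    unfolding cdf_def2 by (intro finite_measure_mono) auto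
  then have "cdf M b = 1" using ab cdf_bounded_prob[of b] by simp
  ultimately show "real_distribution M \<and> (\<exists>a b. cdf M a = 0 \<and> cdf M b = 1)" using rd by blast
next
  assume "real_distribution M \<and> (\<exists>a b. cdf M a = 0 \<and> cdf M b = 1)"
  then obtain a b where rd: "real_distribution M" and ab: "cdf M a = 0" "cdf M b = 1" by blast
  interpret real_distribution M by fact
  have "a \<le> b" using ab cdf_nondecreasing[of b a] by (cases "a \<le> b") auto
  have "{a<..b} = {..b} - {..a}" by auto
  then have "measure M {a<..b} = 1"
    using ab \<open>a \<le> b\<close> by (simp add: finite_measure_Diff cdf_def2)
  moreover have "measure M {a<..b} \<le> measure M {a..b}" by (intro finite_measure_mono) auto
  ultimately have "measure M {a..b} = 1" using prob_le_1[of "{a..b}"] by simp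
  then show "M \<in> cs_dists" unfolding cs_dists_def using rd by blast
qed

lemma cs_dists_real_distribution: "M \<in> cs_dists \<Longrightarrow> real_distribution M"
  by (simp add: cs_dists_iff_cdf)

lemma (in real_distribution) prob_UNIV: "prob UNIV = 1"
  using prob_space by simp

lemma (in real_distribution) AE_in_Ioc_if_cdf:
  assumes "cdf M a = 0" "cdf M b = 1"
  shows "AE x in M. x \<in> {a<..b}"
proof -
  have "a < b" using assms cdf_nondecreasing[of b a] by (cases "a < b") auto
  then show ?thesis
    using assms cdf_diff_eq[of a b] by (subst AE_in_set_eq_1) auto
qed

lemma cs_dists_interval_measure:
  fixes F :: "real \<Rightarrow> real"
  assumes mono: "\<And>x y. x \<le> y \<Longrightarrow> F x \<le> F y" and rc: "\<And>x. continuous (at_right x) F"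
    and F01: "\<And>x. 0 \<le> F x" "\<And>x. F x \<le> 1" and ab: "F a = 0" "F b = 1"
  shows "interval_measure F \<in> cs_dists" "cdf (interval_measure F) = F"
proof -
  have "F x = 0" if "x \<le> a" for x
    using mono[OF that] F01(1)[of x] ab(1) by simp
  then have bot: "(F \<longlongrightarrow> 0) at_bot"
    by (intro tendsto_eventually) (auto simp: eventually_at_bot_linorder)
  have "F x = 1" if "b \<le> x" for x
    using mono[OF that] F01(2)[of x] ab(2) by simp
  then have top: "(F \<longlongrightarrow> 1) at_top"
    by (intro tendsto_eventually) (auto simp: eventually_at_top_linorder)
  show cdf: "cdf (interval_measure F) = F"
    by (rule cdf_interval_measure[OF mono rc bot])
  have "real_distribution (interval_measure F)"
    by (rule real_distribution_interval_measure[OF mono rc bot top])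
  then show "interval_measure F \<in> cs_dists" using ab cdf cs_dists_iff_cdf by auto
qed

lemma rc_distortionD:
  assumes "rc_distortion d"
  shows "\<And>s t. 0 \<le> s \<Longrightarrow> s \<le> t \<Longrightarrow> t \<le> 1 \<Longrightarrow> d s \<le> d t"
    and "\<And>t. 0 \<le> t \<Longrightarrow> t \<le> 1 \<Longrightarrow> 0 \<le> d t \<and> d t \<le> 1"
    and "d 0 = 0" "d 1 = 1"
    and "\<And>t. 0 \<le> t \<Longrightarrow> t < 1 \<Longrightarrow> (d \<longlongrightarrow> d t) (at_right t)"
  using assms unfolding rc_distortion_def distortion_def mono_on_def
  by (auto simp: continuous_within image_subset_iff)

lemma rc_distortion_cdf:
  assumes "real_distribution N" and N01: "cdf N 0 = 0" "cdf N 1 = 1"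
  shows "rc_distortion (cdf N)"
proof -
  interpret real_distribution N by fact
  show ?thesis
    unfolding rc_distortion_def distortion_def mono_on_def
    using N01 cdf_nondecreasing cdf_nonneg cdf_bounded_prob cdf_is_right_cont by auto
qed

text \<open>Right-continuity of \<open>d\<close> is only assumed on \<open>[0,1)\<close>; at a point where the cdf
  equals \<open>1\<close> the composite is eventually constant instead.\<close>
lemma tendsto_distortion_cdf_at_right:
  assumes d: "rc_distortion d" and "real_distribution M"
  shows "((\<lambda>y. d (cdf M y)) \<longlongrightarrow> d (cdf M x)) (at_right x)"
proof -
  interpret real_distribution M by fact
  let ?p = "cdf M x"
  have p01: "0 \<le> ?p" "?p \<le> 1" using cdf_nonneg cdf_bounded_prob by auto
  have ge: "eventually (\<lambda>y. ?p \<le> cdf M y \<and> cdf M y \<le> 1) (at_right x)"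
    by (auto simp: eventually_at_right_field cdf_bounded_prob intro!: exI[of _ "x+1"] cdf_nondecreasing)
  show ?thesis
  proof (cases "?p = 1")
    case True
    have "eventually (\<lambda>y. d (cdf M y) = d ?p) (at_right x)"
      using ge by eventually_elim (use True in auto)
    then show ?thesis by (rule tendsto_eventually)
  next
    case False
    then have p1: "?p < 1" using p01 by simp
    show ?thesis
    proof (rule order_tendstoI)
      fix z assume "z < d ?p"
      show "eventually (\<lambda>y. z < d (cdf M y)) (at_right x)"
        using ge by eventually_elim (use \<open>z < d ?p\<close> rc_distortionD(1)[OF d] p01 in fastforce)
    next
      fix z assume "d ?p < z"
      from order_tendstoD(2)[OF rc_distortionD(5)[OF d p01(1) p1] this]
      obtain b where b: "b > ?p" "\<And>t. ?p < t \<Longrightarrow> t < b \<Longrightarrow> d t < z"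
        unfolding eventually_at_right_field by blast
      have "(cdf M \<longlongrightarrow> ?p) (at_right x)"
        using cdf_is_right_cont[of x] by (simp add: continuous_within)
      from order_tendstoD(2)[OF this b(1)]
      have "eventually (\<lambda>y. cdf M y < b) (at_right x)" .
      then show "eventually (\<lambda>y. d (cdf M y) < z) (at_right x)"
        using ge by eventually_elim (use b \<open>d ?p < z\<close> in \<open>fastforce simp: order.order_iff_strict\<close>)
    qed
  qed
qed

lemma
  assumes d: "rc_distortion d" and M: "M \<in> cs_dists"
  shows Td_in_cs_dists: "Td d M \<in> cs_dists"
    and cdf_Td: "cdf (Td d M) = (\<lambda>x. d (cdf M x))"
proof -
  have rd: "real_distribution M" using M cs_dists_iff_cdf by auto
  interpret real_distribution M by fact
  obtain a b where ab: "cdf M a = 0" "cdf M b = 1" using M cs_dists_iff_cdf by auto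
  have F01: "0 \<le> cdf M x" "cdf M x \<le> 1" for x using cdf_nonneg cdf_bounded_prob by auto
  have eq: "Td d M = interval_measure (\<lambda>x. d (cdf M x))"
    unfolding Td_def by (intro arg_cong[where f=interval_measure] ext tendsto_Lim)
      (auto intro: tendsto_distortion_cdf_at_right[OF d rd])
  have mono: "d (cdf M x) \<le> d (cdf M y)" if "x \<le> y" for x y
    using rc_distortionD(1)[OF d] F01 cdf_nondecreasing[OF that] by blast
  have rc: "continuous (at_right x) (\<lambda>x. d (cdf M x))" for x
    by (simp add: continuous_within tendsto_distortion_cdf_at_right[OF d rd])
  show "Td d M \<in> cs_dists" "cdf (Td d M) = (\<lambda>x. d (cdf M x))"
    unfolding eq using cs_dists_interval_measure[OF mono rc, of a b] rc_distortionD(2-4)[OF d] F01 ab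
    by auto
qed

lemma cdf_Tu:
  assumes "mono u" and "real_distribution M"
  shows "cdf (Tu u M) x = measure M {y. u y \<le> x}"
proof -
  interpret real_distribution M by fact
  have "u \<in> borel_measurable M" using borel_measurable_mono[OF assms(1)] by simp
  then show ?thesis
    unfolding Tu_def cdf_def2 by (subst measure_distr) (auto simp: vimage_def)
qed

lemma Tu_in_cs_dists:
  assumes u: "mono u" and M: "M \<in> cs_dists"
  shows "Tu u M \<in> cs_dists"
proof -
  have rd: "real_distribution M" using M cs_dists_iff_cdf by auto
  interpret real_distribution M by fact
  have meas: "u \<in> borel_measurable M" using borel_measurable_mono[OF u] by simp
  have sets: "{y. u y \<le> c} \<in> sets M" for c
    using measurable_sets[OF meas atMost_borel[of c]] by (simp add: vimage_def)
  obtain a b where ab: "cdf M a = 0" "cdf M b = 1" using M cs_dists_iff_cdf by auto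
  have "{y. u y \<le> u a - 1} \<subseteq> {..a}"
  proof (intro subsetI, rule ccontr)
    fix y assume "y \<in> {y. u y \<le> u a - 1}" "y \<notin> {..a}"
    then show False using monoD[OF u, of a y] by simp
  qed
  then have "measure M {y. u y \<le> u a - 1} \<le> measure M {..a}"
    by (intro finite_measure_mono) auto
  then have "cdf (Tu u M) (u a - 1) = 0"
    using ab cdf_Tu[OF u rd] by (simp add: cdf_def2 antisym)
  moreover have "measure M {..b} \<le> measure M {y. u y \<le> u b}"
    using sets u by (intro finite_measure_mono) (auto simp: mono_def)
  then have "cdf (Tu u M) (u b) = 1"
    using ab cdf_Tu[OF u rd] prob_le_1 by (simp add: cdf_def2 antisym)
  moreover have "real_distribution (Tu u M)" unfolding Tu_def using meas by simp
  ultimately show "Tu u M \<in> cs_dists" using cs_dists_iff_cdf by blast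
qed

lemma sublevel_set_incr_left_cont:
  assumes u: "incr_left_cont u"
  obtains "{y. u y \<le> x} = {}" | "{y. u y \<le> x} = UNIV" | a where "{y. u y \<le> x} = {..a}"
proof -
  let ?S = "{y. u y \<le> x}"
  have mono: "mono u" and lc: "\<And>a. (u \<longlongrightarrow> u a) (at_left a)"
    using u unfolding incr_left_cont_def by (auto simp: continuous_within)
  have "\<exists>a. ?S = {..a}" if ne: "?S \<noteq> {}" and nu: "?S \<noteq> UNIV"
  proof -
    obtain z where z: "z \<notin> ?S" using nu by auto
    have "y < z" if "y \<in> ?S" for y
      using that z mono by (metis mem_Collect_eq monoD not_le order_trans)
    then have bdd: "bdd_above ?S" by (metis bdd_aboveI less_imp_le)
    have below: "u y \<le> x" if "y < Sup ?S" for y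
    proof -
      obtain t where "t \<in> ?S" "y < t" using less_cSup_iff[OF ne bdd] \<open>y < Sup ?S\<close> by auto
      then show ?thesis using mono by (metis mem_Collect_eq monoD less_imp_le order_trans)
    qed
    have "u (Sup ?S) \<le> x"
      by (rule tendsto_upperbound[OF lc])
         (auto simp: eventually_at_left_field intro!: exI[of _ "Sup ?S - 1"] below)
    then have "?S = {..Sup ?S}"
      using cSup_upper[OF _ bdd] mono by (auto dest: monoD intro: order_trans)
    then show ?thesis by blast
  qed
  then show ?thesis using that by blast
qed

lemma Td_Tu_commute:
  assumes d: "rc_distortion d" and u: "incr_left_cont u" and M: "M \<in> cs_dists"
  shows "Td d (Tu u M) = Tu u (Td d M)"
proof -
  have mono: "mono u" using u by (simp add: incr_left_cont_def)
  have TuM: "Tu u M \<in> cs_dists" and TdM: "Td d M \<in> cs_dists"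
    using Tu_in_cs_dists[OF mono M] Td_in_cs_dists[OF d M] .
  interpret M: real_distribution M using M by (rule cs_dists_real_distribution)
  interpret TdM: real_distribution "Td d M" using TdM by (rule cs_dists_real_distribution)
  show ?thesis
  proof (rule cdf_unique)
    show "real_distribution (Td d (Tu u M))" "real_distribution (Tu u (Td d M))"
      using Td_in_cs_dists[OF d TuM] Tu_in_cs_dists[OF mono TdM]
      by (auto intro: cs_dists_real_distribution)
    show "cdf (Td d (Tu u M)) = cdf (Tu u (Td d M))"
    proof
      fix x
      have "d (measure M {y. u y \<le> x}) = measure (Td d M) {y. u y \<le> x}"
        using rc_distortionD(3,4)[OF d] cdf_Td[OF d M] M.prob_UNIV TdM.prob_UNIV
        by (cases rule: sublevel_set_incr_left_cont[OF u, of x]) (auto simp flip: cdf_def2)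
      then show "cdf (Td d (Tu u M)) x = cdf (Tu u (Td d M)) x"
        using cdf_Td[OF d TuM] cdf_Tu[OF mono M.real_distribution_axioms]
          cdf_Tu[OF mono TdM.real_distribution_axioms] by simp
    qed
  qed
qed

definition quantile :: "real measure \<Rightarrow> real \<Rightarrow> real" where
  "quantile N p = Inf {x. p \<le> cdf N x}"

lemma quantile_le_iff:
  assumes N: "N \<in> cs_dists" and p: "0 < p" "p \<le> 1"
  shows "quantile N p \<le> x \<longleftrightarrow> p \<le> cdf N x"
proof -
  interpret real_distribution N using N by (rule cs_dists_real_distribution)
  obtain a b where ab: "cdf N a = 0" "cdf N b = 1" using N cs_dists_iff_cdf by auto
  let ?A = "{x. p \<le> cdf N x}"
  have ne: "?A \<noteq> {}" using ab p by (auto intro!: exI[of _ b])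
  have "a \<le> x" if "x \<in> ?A" for x
    using that ab p cdf_nondecreasing[of x a] by (cases "a \<le> x") auto
  then have bdd: "bdd_below ?A" by (rule bdd_belowI)
  have "p \<le> cdf N (Inf ?A)"
  proof (rule tendsto_lowerbound)
    show "(cdf N \<longlongrightarrow> cdf N (Inf ?A)) (at_right (Inf ?A))"
      using cdf_is_right_cont by (simp add: continuous_within)
    have "p \<le> cdf N y" if "Inf ?A < y" for y
    proof -
      obtain t where "t \<in> ?A" "t < y" using cInf_less_iff[OF ne bdd] \<open>Inf ?A < y\<close> by auto
      then show ?thesis using cdf_nondecreasing[of t y] by auto
    qed
    then show "\<forall>\<^sub>F y in at_right (Inf ?A). p \<le> cdf N y"
      by (auto simp: eventually_at_right_field intro!: exI[of _ "Inf ?A + 1"])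
  qed simp
  then show ?thesis
    unfolding quantile_def using cdf_nondecreasing cInf_lower[OF _ bdd] by (auto intro: order_trans)
qed

lemma quantile_mono:
  assumes "N \<in> cs_dists" and "0 < p" "p \<le> p'" "p' \<le> 1"
  shows "quantile N p \<le> quantile N p'"
  using quantile_le_iff[OF assms(1), of p] quantile_le_iff[OF assms(1), of p' "quantile N p'"] assms
  by auto

lemma tendsto_quantile_at_left:
  assumes N: "N \<in> cs_dists" and p: "0 < p" "p \<le> 1"
  shows "(quantile N \<longlongrightarrow> quantile N p) (at_left p)"
proof (rule order_tendstoI)
  interpret real_distribution N using N by (rule cs_dists_real_distribution)
  fix z assume "z < quantile N p"
  then have Fz: "cdf N z < p" using quantile_le_iff[OF N p, of z] by auto
  define w where "w = (cdf N z + p) / 2"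
  have w: "w < p" "cdf N z < w" "0 < w" using Fz cdf_nonneg[of z] w_def by auto
  have "z < quantile N y" if "w < y" "y < p" for y
    using quantile_le_iff[OF N, of y z] that w p by auto
  then show "\<forall>\<^sub>F y in at_left p. z < quantile N y"
    using w by (auto simp: eventually_at_left_field)
next
  fix z assume "quantile N p < z"
  then have "quantile N y < z" if "0 < y" "y < p" for y
    using quantile_mono[OF N, of y p] p that by auto
  then show "\<forall>\<^sub>F y in at_left p. quantile N y < z"
    using p by (auto simp: eventually_at_left_field)
qed

lemma cs_dists_eqI_quantile:
  assumes N: "N \<in> cs_dists" and N': "N' \<in> cs_dists"
    and eq: "\<And>p. 0 < p \<Longrightarrow> p \<le> 1 \<Longrightarrow> quantile N p = quantile N' p"
  shows "N = N'"
proof (rule cdf_unique)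
  interpret N: real_distribution N using N by (rule cs_dists_real_distribution)
  interpret N': real_distribution N' using N' by (rule cs_dists_real_distribution)
  show "real_distribution N" "real_distribution N'"
    by unfold_locales
  show "cdf N = cdf N'"
  proof
    fix x
    have iff: "p \<le> cdf N x \<longleftrightarrow> p \<le> cdf N' x" if "0 < p" "p \<le> 1" for p
      using quantile_le_iff[OF N that] quantile_le_iff[OF N' that] eq[OF that] by simp
    have "cdf N x \<le> cdf N' x"
      using iff[of "cdf N x"] N.cdf_nonneg[of x] N'.cdf_nonneg[of x] N.cdf_bounded_prob[of x]
      by (cases "cdf N x = 0") auto
    moreover have "cdf N' x \<le> cdf N x"
      using iff[of "cdf N' x"] N.cdf_nonneg[of x] N'.cdf_nonneg[of x] N'.cdf_bounded_prob[of x]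
      by (cases "cdf N' x = 0") auto
    ultimately show "cdf N x = cdf N' x" by simp
  qed
qed

lemma quantile_le_sublevel_iff:
  assumes M: "M \<in> cs_dists" and u: "incr_left_cont u" and p: "0 < p" "p \<le> 1"
  shows "u (quantile M p) \<le> x \<longleftrightarrow> p \<le> measure M {y. u y \<le> x}"
proof -
  interpret real_distribution M using M by (rule cs_dists_real_distribution)
  show ?thesis
    using p prob_UNIV quantile_le_iff[OF M p]
    by (cases rule: sublevel_set_incr_left_cont[OF u, of x]) (auto simp flip: cdf_def2)
qed

lemma quantile_Tu:
  assumes M: "M \<in> cs_dists" and u: "incr_left_cont u" and p: "0 < p" "p \<le> 1"
  shows "quantile (Tu u M) p = u (quantile M p)"
proof -
  have mono: "mono u" using u by (simp add: incr_left_cont_def)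
  have "quantile (Tu u M) p \<le> x \<longleftrightarrow> u (quantile M p) \<le> x" for x
    using quantile_le_iff[OF Tu_in_cs_dists[OF mono M] p] quantile_le_sublevel_iff[OF M u p]
      cdf_Tu[OF mono cs_dists_real_distribution[OF M]] by simp
  then show ?thesis by (metis order_refl antisym)
qed

definition uniform_dist :: "real \<Rightarrow> real \<Rightarrow> real measure" where
  "uniform_dist a b = interval_measure (\<lambda>x. max 0 (min 1 ((x - a) / (b - a))))"

lemma
  assumes "a < b"
  shows uniform_dist_in_cs_dists: "uniform_dist a b \<in> cs_dists"
    and cdf_uniform_dist: "cdf (uniform_dist a b) = (\<lambda>x. max 0 (min 1 ((x - a) / (b - a))))"
proof -
  let ?F = "\<lambda>x. max 0 (min 1 ((x - a) / (b - a)))"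
  have mono: "?F x \<le> ?F y" if "x \<le> y" for x y
    using divide_right_mono[of "x - a" "y - a" "b - a"] that assms by (auto simp: max_def min_def)
  have rc: "continuous (at_right x) ?F" for x
    unfolding continuous_within using assms by (intro tendsto_intros) auto
  have F01: "0 \<le> ?F x" "?F x \<le> 1" for x
    by simp_all
  have "?F a = 0" "?F b = 1"
    using assms by simp_all
  from cs_dists_interval_measure[OF mono rc F01 this]
  show "uniform_dist a b \<in> cs_dists" "cdf (uniform_dist a b) = ?F"
    unfolding uniform_dist_def by simp_all
qed

lemma quantile_uniform_dist:
  assumes "a < b" "0 < p" "p \<le> 1"
  shows "quantile (uniform_dist a b) p = a + p * (b - a)"
proof -
  have "quantile (uniform_dist a b) p \<le> x \<longleftrightarrow> a + p * (b - a) \<le> x" for x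
  proof -
    have "quantile (uniform_dist a b) p \<le> x \<longleftrightarrow> p \<le> max 0 (min 1 ((x - a) / (b - a)))"
      using quantile_le_iff[OF uniform_dist_in_cs_dists[OF assms(1)] assms(2,3)]
        cdf_uniform_dist[OF assms(1)] by simp
    also have "\<dots> \<longleftrightarrow> p \<le> (x - a) / (b - a)"
      using assms(2,3) by linarith
    also have "\<dots> \<longleftrightarrow> a + p * (b - a) \<le> x"
      using assms by (simp add: pos_le_divide_eq algebra_simps)
    finally show ?thesis .
  qed
  then show ?thesis by (metis order_refl antisym)
qed

lemma cdf_return: "cdf (return borel c) x = (if c \<le> x then 1 else 0)"
  unfolding cdf_def2 by (simp add: measure_return)

lemma return_in_cs_dists: "return borel (c::real) \<in> cs_dists"
proof -
  have "real_distribution (return borel c)"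
    unfolding real_distribution_def real_distribution_axioms_def by (auto intro: prob_space_return)
  then show ?thesis using cdf_return[of c "c - 1"] cdf_return[of c c] cs_dists_iff_cdf by auto
qed

lemma quantile_return: "0 < p \<Longrightarrow> p \<le> 1 \<Longrightarrow> quantile (return borel c) p = c"
  using quantile_le_iff[OF return_in_cs_dists, of p c c]
    quantile_le_iff[OF return_in_cs_dists, of p c "quantile (return borel c) p"] cdf_return[of c]
  by (auto split: if_splits)

definition step_distortion :: "real \<Rightarrow> real \<Rightarrow> real" where
  "step_distortion p t = (if p \<le> t then 1 else 0)"

lemma rc_distortion_step_distortion:
  assumes "0 < p" "p \<le> 1"
  shows "rc_distortion (step_distortion p)"
proof -
  have "continuous (at_right x) (step_distortion p)" for x
  proof -
    have "\<forall>\<^sub>F t in at_right x. step_distortion p t = step_distortion p x"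
    proof (cases "p \<le> x")
      case True
      then show ?thesis by (auto simp: eventually_at_right_field step_distortion_def intro!: exI[of _ "x + 1"])
    next
      case False
      then show ?thesis by (auto simp: eventually_at_right_field step_distortion_def intro!: exI[of _ p])
    qed
    then show ?thesis unfolding continuous_within by (rule tendsto_eventually)
  qed
  then show ?thesis
    using assms unfolding rc_distortion_def distortion_def mono_on_def step_distortion_def by auto
qed

lemma Td_step_distortion:
  assumes N: "N \<in> cs_dists" and p: "0 < p" "p \<le> 1"
  shows "Td (step_distortion p) N = return borel (quantile N p)"
proof (rule cdf_unique)
  show "real_distribution (Td (step_distortion p) N)" "real_distribution (return borel (quantile N p))"
    using Td_in_cs_dists[OF rc_distortion_step_distortion[OF p] N] return_in_cs_dists
    by (auto intro: cs_dists_real_distribution)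
  show "cdf (Td (step_distortion p) N) = cdf (return borel (quantile N p))"
    using cdf_Td[OF rc_distortion_step_distortion[OF p] N] cdf_return quantile_le_iff[OF N p]
    by (auto simp: step_distortion_def)
qed

lemma incr_left_cont_if_quantile_comp:
  assumes T_maps: "\<forall>M\<in>cs_dists. T M \<in> cs_dists"
    and comp: "\<And>M p. M \<in> cs_dists \<Longrightarrow> 0 < p \<Longrightarrow> p \<le> 1 \<Longrightarrow> quantile (T M) p = w (quantile M p)"
  shows "incr_left_cont w"
proof -
  have TU: "T (uniform_dist a b) \<in> cs_dists" if "a < b" for a b
    using T_maps uniform_dist_in_cs_dists[OF that] by blast
  have w_uniform: "w (a + p * (b - a)) = quantile (T (uniform_dist a b)) p"
    if "a < b" "0 < p" "p \<le> 1" for a b p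
    using comp[OF uniform_dist_in_cs_dists[OF that(1)] that(2,3)] quantile_uniform_dist[OF that] by simp
  have "mono w"
  proof
    fix x y :: real assume "x \<le> y"
    define p where "p = 1 / (y - x + 1)"
    have p: "0 < p" "p \<le> 1" and x: "x = x - 1 + p * (y - (x - 1))"
      using \<open>x \<le> y\<close> by (auto simp: p_def field_simps)
    have "w x = quantile (T (uniform_dist (x - 1) y)) p"
      using w_uniform[of "x - 1" y p] p \<open>x \<le> y\<close> x by simp
    also have "\<dots> \<le> quantile (T (uniform_dist (x - 1) y)) 1"
      using quantile_mono[OF TU, of "x - 1" y p 1] \<open>x \<le> y\<close> p by simp
    also have "\<dots> = w y"
      using w_uniform[of "x - 1" y 1] \<open>x \<le> y\<close> by simp
    finally show "w x \<le> w y" .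
  qed
  moreover have "continuous (at_left c) w" for c
  proof -
    let ?Q = "quantile (T (uniform_dist (c - 1) c))"
    have "filterlim (\<lambda>y. y - c + 1) (at_left 1) (at_left c)"
    proof (rule tendsto_imp_filterlim_at_left)
      show "((\<lambda>y. y - c + 1) \<longlongrightarrow> 1) (at_left c)"
        by (auto intro!: tendsto_eq_intros)
      show "\<forall>\<^sub>F y in at_left c. y - c + 1 < 1"
        by (auto simp: eventually_at_left_field intro!: exI[of _ "c - 1"])
    qed
    from filterlim_compose[OF tendsto_quantile_at_left[OF TU] this]
    have "((\<lambda>y. ?Q (y - c + 1)) \<longlongrightarrow> ?Q 1) (at_left c)" by simp
    moreover have "?Q (y - c + 1) = w y" if "c - 1 < y" "y < c" for y
      using w_uniform[of "c - 1" c "y - c + 1"] that by simp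
    then have "\<forall>\<^sub>F y in at_left c. ?Q (y - c + 1) = w y"
      by (auto simp: eventually_at_left_field intro!: exI[of _ "c - 1"])
    moreover have "?Q 1 = w c"
      using w_uniform[of "c - 1" c 1] by simp
    ultimately show ?thesis
      unfolding continuous_within by (simp add: tendsto_cong)
  qed
  ultimately show ?thesis by (simp add: incr_left_cont_def)
qed

lemma eq_Tu_if_commutes_Td:
  assumes T_maps: "\<forall>M\<in>cs_dists. T M \<in> cs_dists"
    and comm: "\<forall>d. rc_distortion d \<longrightarrow> (\<forall>M\<in>cs_dists. T (Td d M) = Td d (T M))"
  shows "\<exists>u. incr_left_cont u \<and> (\<forall>M\<in>cs_dists. T M = Tu u M)"
proof -
  define w where "w c = quantile (T (return borel c)) (1/2)" for c
  have comp: "quantile (T M) p = w (quantile M p)" if M: "M \<in> cs_dists" and p: "0 < p" "p \<le> 1" for M p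
  proof -
    have "T (return borel (quantile M p)) = T (Td (step_distortion p) M)"
      using Td_step_distortion[OF M p] by simp
    also have "\<dots> = Td (step_distortion p) (T M)"
      using comm rc_distortion_step_distortion[OF p] M by simp
    also have "\<dots> = return borel (quantile (T M) p)"
      using Td_step_distortion[OF _ p] T_maps M by simp
    finally show ?thesis
      unfolding w_def using quantile_return[of "1/2"] by simp
  qed
  have w: "incr_left_cont w"
    by (rule incr_left_cont_if_quantile_comp[OF T_maps comp])
  have "T M = Tu w M" if M: "M \<in> cs_dists" for M
    using T_maps M Tu_in_cs_dists[of w M] w comp[OF M] quantile_Tu[OF M w]
    by (intro cs_dists_eqI_quantile) (auto simp: incr_left_cont_def)
  with w show ?thesis by blast
qed

text \<open>The quantile function of \<open>M\<close>, extended to the real line; any \<open>a\<close> with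
  \<open>cdf M a = 0\<close> is a lower bound of the quantiles, which keeps the extension increasing.\<close>
definition quantile_ext :: "real \<Rightarrow> real measure \<Rightarrow> real \<Rightarrow> real" where
  "quantile_ext a M v = (if v \<le> 0 then a else quantile M (min v 1))"

lemma incr_left_cont_quantile_ext:
  assumes M: "M \<in> cs_dists" and a: "cdf M a = 0"
  shows "incr_left_cont (quantile_ext a M)"
proof -
  interpret real_distribution M using M by (rule cs_dists_real_distribution)
  have a_le: "a \<le> quantile M p" if "0 < p" "p \<le> 1" for p
    using quantile_le_iff[OF M that, of "quantile M p"] cdf_nondecreasing[of "quantile M p" a] a that
    by (cases "a \<le> quantile M p") auto
  have "quantile_ext a M x \<le> quantile_ext a M y" if "x \<le> y" for x y
    using that a_le[of "min y 1"] quantile_mono[OF M, of "min x 1" "min y 1"]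
    by (auto simp: quantile_ext_def)
  then have "mono (quantile_ext a M)" by (rule monoI)
  moreover have "(quantile_ext a M \<longlongrightarrow> quantile_ext a M v) (at_left v)" for v
  proof -
    consider "v \<le> 0" | "0 < v" "v \<le> 1" | "1 < v" by linarith
    then show ?thesis
    proof cases
      case 1
      then have "\<forall>\<^sub>F y in at_left v. quantile_ext a M y = quantile_ext a M v"
        by (auto simp: eventually_at_left_field quantile_ext_def intro!: exI[of _ "v - 1"])
      then show ?thesis by (rule tendsto_eventually)
    next
      case 2
      then have "\<forall>\<^sub>F y in at_left v. quantile M y = quantile_ext a M y"
        by (auto simp: eventually_at_left_field quantile_ext_def intro!: exI[of _ 0])
      moreover have "(quantile M \<longlongrightarrow> quantile_ext a M v) (at_left v)"
        using tendsto_quantile_at_left[OF M 2] 2 by (simp add: quantile_ext_def)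
      ultimately show ?thesis by (rule tendsto_cong[THEN iffD1])
    next
      case 3
      then have "\<forall>\<^sub>F y in at_left v. quantile_ext a M y = quantile_ext a M v"
        by (auto simp: eventually_at_left_field quantile_ext_def intro!: exI[of _ 1])
      then show ?thesis by (rule tendsto_eventually)
    qed
  qed
  ultimately show ?thesis
    by (simp add: incr_left_cont_def continuous_within)
qed

text \<open>Only the part of \<open>N\<close> on \<open>(0,1]\<close> matters, and there the sublevel sets of the
  quantile function are the intervals \<open>(0, cdf M x]\<close>.\<close>
lemma cdf_Tu_quantile_ext:
  assumes M: "M \<in> cs_dists" "cdf M a = 0"
    and N: "real_distribution N" "cdf N 0 = 0" "cdf N 1 = 1"
  shows "cdf (Tu (quantile_ext a M) N) x = cdf N (cdf M x)"
proof -
  interpret N: real_distribution N by fact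
  interpret M: real_distribution M using M(1) by (rule cs_dists_real_distribution)
  let ?S = "{v. quantile_ext a M v \<le> x}"
  have q: "mono (quantile_ext a M)"
    using incr_left_cont_quantile_ext[OF M] by (simp add: incr_left_cont_def)
  have "?S \<in> sets borel"
    using measurable_sets[OF borel_measurable_mono[OF q] atMost_borel[of x]] by (simp add: vimage_def)
  moreover have "AE v in N. v \<in> ?S \<longleftrightarrow> v \<in> {0<..cdf M x}"
    using N.AE_in_Ioc_if_cdf[OF N(2,3)]
  proof eventually_elim
    case (elim v)
    then show ?case
      using quantile_le_iff[OF M(1), of v x] M.cdf_bounded_prob[of x] by (auto simp: quantile_ext_def)
  qed
  ultimately have "measure N ?S = measure N {0<..cdf M x}"
    by (intro N.finite_measure_eq_AE) auto
  also have "\<dots> = cdf N (cdf M x)"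
    using N.cdf_diff_eq[of 0 "cdf M x"] N(2) M.cdf_nonneg[of x] by (cases "cdf M x = 0") auto
  finally show ?thesis
    using cdf_Tu[OF q N(1)] by simp
qed

lemma Tu_quantile_ext_uniform01:
  assumes M: "M \<in> cs_dists" "cdf M a = 0"
  shows "Tu (quantile_ext a M) (uniform_dist 0 1) = M"
proof (rule cdf_unique)
  let ?U = "uniform_dist 0 1"
  have U: "?U \<in> cs_dists" "cdf ?U 0 = 0" "cdf ?U 1 = 1"
    using uniform_dist_in_cs_dists[of 0 1] cdf_uniform_dist[of 0 1] by simp_all
  interpret M: real_distribution M using M(1) by (rule cs_dists_real_distribution)
  show "real_distribution (Tu (quantile_ext a M) ?U)" "real_distribution M"
    using Tu_in_cs_dists[OF _ U(1)] incr_left_cont_quantile_ext[OF M]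
    by (auto simp: cs_dists_real_distribution incr_left_cont_def intro: M.real_distribution_axioms)
  show "cdf (Tu (quantile_ext a M) ?U) = cdf M"
    using cdf_Tu_quantile_ext[OF M cs_dists_real_distribution[OF U(1)] U(2,3)] cdf_uniform_dist[of 0 1]
      M.cdf_nonneg M.cdf_bounded_prob by auto
qed

text \<open>Since the extended quantile functions of \<open>U\<close> fix \<open>U\<close>, \<open>T(U)\<close> is invariant under
  them. The one that is \<open>0\<close> on \<open>(-\<infinity>,0]\<close> puts \<open>T(U)\<close> on \<open>[0,1]\<close>; the one that is \<open>-1\<close>
  there moves the mass of \<open>(-\<infinity>,0]\<close> to \<open>-1\<close>, so that mass vanishes.\<close>
lemma cdf_T_uniform01:
  assumes T_maps: "\<forall>M\<in>cs_dists. T M \<in> cs_dists"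
    and comm: "\<forall>u. incr_left_cont u \<longrightarrow> (\<forall>M\<in>cs_dists. T (Tu u M) = Tu u (T M))"
  shows "cdf (T (uniform_dist 0 1)) 0 = 0" "cdf (T (uniform_dist 0 1)) 1 = 1"
proof -
  define U where "U = uniform_dist 0 1"
  have U: "U \<in> cs_dists" "cdf U 0 = 0" "cdf U (-1) = 0"
    using uniform_dist_in_cs_dists[of 0 1] cdf_uniform_dist[of 0 1] by (simp_all add: U_def)
  define N where "N = T U"
  have "N \<in> cs_dists" using T_maps U N_def by blast
  interpret N: real_distribution N using \<open>N \<in> cs_dists\<close> by (rule cs_dists_real_distribution)
  have cdf_N: "cdf N x = measure N {y. quantile_ext a U y \<le> x}" if "cdf U a = 0" for a x
  proof -
    have q: "incr_left_cont (quantile_ext a U)"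
      using incr_left_cont_quantile_ext[OF U(1) that] .
    have "N = T (Tu (quantile_ext a U) U)"
      using Tu_quantile_ext_uniform01[OF U(1) that] by (simp add: N_def U_def)
    also have "\<dots> = Tu (quantile_ext a U) N"
      using comm q U(1) N_def by blast
    finally show ?thesis
      using cdf_Tu[of "quantile_ext a U" N] q N.real_distribution_axioms by (simp add: incr_left_cont_def)
  qed
  have qU: "quantile_ext a U v = (if v \<le> 0 then a else min v 1)" for a v
    using quantile_uniform_dist[of 0 1 "min v 1"] by (simp add: quantile_ext_def U_def)
  have "{y. quantile_ext 0 U y \<le> 1} = UNIV" "{y. quantile_ext 0 U y \<le> -1/2} = {}"
    "{y. quantile_ext (-1) U y \<le> -1/2} = {..0}"
    by (auto simp: qU)
  then show "cdf (T (uniform_dist 0 1)) 0 = 0" "cdf (T (uniform_dist 0 1)) 1 = 1"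
    using cdf_N[OF U(2), of 1] cdf_N[OF U(2), of "-1/2"] cdf_N[OF U(3), of "-1/2"] N.prob_UNIV
    by (simp_all add: N_def U_def cdf_def2)
qed

lemma eq_Td_if_commutes_Tu:
  assumes T_maps: "\<forall>M\<in>cs_dists. T M \<in> cs_dists"
    and comm: "\<forall>u. incr_left_cont u \<longrightarrow> (\<forall>M\<in>cs_dists. T (Tu u M) = Tu u (T M))"
  shows "\<exists>d. rc_distortion d \<and> (\<forall>M\<in>cs_dists. T M = Td d M)"
proof -
  define U where "U = uniform_dist 0 1"
  define N where "N = T U"
  have N: "real_distribution N" "cdf N 0 = 0" "cdf N 1 = 1"
    using T_maps uniform_dist_in_cs_dists[of 0 1] cdf_T_uniform01[OF T_maps comm]
    by (auto simp: N_def U_def cs_dists_real_distribution)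
  have d: "rc_distortion (cdf N)"
    using rc_distortion_cdf[OF N] .
  have "T M = Td (cdf N) M" if M: "M \<in> cs_dists" for M
  proof -
    obtain a where a: "cdf M a = 0" using M cs_dists_iff_cdf by auto
    have "T M = T (Tu (quantile_ext a M) U)"
      using Tu_quantile_ext_uniform01[OF M a] by (simp add: U_def)
    also have "\<dots> = Tu (quantile_ext a M) N"
      using comm incr_left_cont_quantile_ext[OF M a] uniform_dist_in_cs_dists[of 0 1]
      by (simp add: N_def U_def)
    finally show ?thesis
      using cdf_Tu_quantile_ext[OF M a N] cdf_Td[OF d M] Td_in_cs_dists[OF d M] T_maps M
      by (intro cdf_unique) (auto simp: cs_dists_real_distribution)
  qed
  with d show ?thesis by blast
qed

theorem proposition3:
  fixes T :: "real measure \<Rightarrow> real measure"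
  assumes T_maps: "\<forall>M\<in>cs_dists. T M \<in> cs_dists"
  shows "((\<forall>u. incr_left_cont u \<longrightarrow> (\<forall>M\<in>cs_dists. T (Tu u M) = Tu u (T M)))
           \<longleftrightarrow> (\<exists>d. rc_distortion d \<and> (\<forall>M\<in>cs_dists. T M = Td d M)))
         \<and> ((\<forall>d. rc_distortion d \<longrightarrow> (\<forall>M\<in>cs_dists. T (Td d M) = Td d (T M)))
           \<longleftrightarrow> (\<exists>u. incr_left_cont u \<and> (\<forall>M\<in>cs_dists. T M = Tu u M)))"
proof (intro conjI iffI)
  show "\<exists>d. rc_distortion d \<and> (\<forall>M\<in>cs_dists. T M = Td d M)"
    if "\<forall>u. incr_left_cont u \<longrightarrow> (\<forall>M\<in>cs_dists. T (Tu u M) = Tu u (T M))"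
    using eq_Td_if_commutes_Tu[OF T_maps that] .
next
  assume "\<exists>d. rc_distortion d \<and> (\<forall>M\<in>cs_dists. T M = Td d M)"
  then obtain d where d: "rc_distortion d" and T: "\<forall>M\<in>cs_dists. T M = Td d M" by blast
  show "\<forall>u. incr_left_cont u \<longrightarrow> (\<forall>M\<in>cs_dists. T (Tu u M) = Tu u (T M))"
    using T Td_Tu_commute[OF d] Tu_in_cs_dists by (simp add: incr_left_cont_def)
next
  show "\<exists>u. incr_left_cont u \<and> (\<forall>M\<in>cs_dists. T M = Tu u M)"
    if "\<forall>d. rc_distortion d \<longrightarrow> (\<forall>M\<in>cs_dists. T (Td d M) = Td d (T M))"
    using eq_Tu_if_commutes_Td[OF T_maps that] .
next
  assume "\<exists>u. incr_left_cont u \<and> (\<forall>M\<in>cs_dists. T M = Tu u M)"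
  then obtain u where u: "incr_left_cont u" and T: "\<forall>M\<in>cs_dists. T M = Tu u M" by blast
  show "\<forall>d. rc_distortion d \<longrightarrow> (\<forall>M\<in>cs_dists. T (Td d M) = Td d (T M))"
    using T Td_Tu_commute[OF _ u] Td_in_cs_dists by simp
qed

end
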